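(* Let $(A,\to,1)$ be any algebra of type $(2,0)$. Then (i) if $(A,\to,1)$ satisfies (M) and (BB), it satisfies (B); (ii) if $(A,\to,1)$ satisfies (M) and (B), it satisfies ( ** ).
   Context: Properties, required for all $x,y,z\in A$: (M) $1\to x=x$; (B) $(y\to z)\to((x\to y)\to(x\to z))=1$; (BB) $(y\to z)\to((z\to x)\to(y\to x))=1$; ( ** ) $y\to z=1$ implies $(z\to x)\to(y\to x)=1$. *)

theory Defs
  imports Main
begin

text \<open>An algebra (A, imp, one) of type (2,0): carrier is the whole type 'a.\<close>

definition prop_M :: "('a \<Rightarrow> 'a \<Rightarrow> 'a) \<Rightarrow> 'a \<Rightarrow> bool" where
  "prop_M imp one \<longleftrightarrow> (\<forall>x. imp one x = x)"

definition prop_B :: "('a \<Rightarrow> 'a \<Rightarrow> 'a) \<Rightarrow> 'a \<Rightarrow> bool" where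
  "prop_B imp one \<longleftrightarrow>
     (\<forall>x y z. imp (imp y z) (imp (imp x y) (imp x z)) = one)"

definition prop_BB :: "('a \<Rightarrow> 'a \<Rightarrow> 'a) \<Rightarrow> 'a \<Rightarrow> bool" where
  "prop_BB imp one \<longleftrightarrow>
     (\<forall>x y z. imp (imp y z) (imp (imp z x) (imp y x)) = one)"

definition prop_star2 :: "('a \<Rightarrow> 'a \<Rightarrow> 'a) \<Rightarrow> 'a \<Rightarrow> bool" where
  "prop_star2 imp one \<longleftrightarrow>
     (\<forall>x y z. imp y z = one \<longrightarrow> imp (imp z x) (imp y x) = one)"

end

theory Submission
  imports Defs
begin

text \<open>(BB) with y = 1 gives z \<rightarrow> ((z \<rightarrow> x) \<rightarrow> x) = 1, and with y \<rightarrow> z = 1 it makes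
  the relation a \<rightarrow> b = 1 transitive. Together they yield the exchange rule
  p \<rightarrow> (q \<rightarrow> r) = 1 \<Longrightarrow> q \<rightarrow> (p \<rightarrow> r) = 1, which turns the instance
  (x \<rightarrow> y) \<rightarrow> ((y \<rightarrow> z) \<rightarrow> (x \<rightarrow> z)) = 1 of (BB) into (B).
  Part (ii) is (B) with its first premise replaced by 1.\<close>

lemma BB_trans:
  assumes "prop_M imp one" "prop_BB imp one"
    and "imp a b = one" "imp b c = one"
  shows "imp a c = one"
proof -
  have "imp (imp a b) (imp (imp b c) (imp a c)) = one"
    using assms(2) by (simp add: prop_BB_def)
  then show ?thesis
    using assms(1,3,4) by (simp add: prop_M_def)
qed

lemma BB_imp_imp_self:
  assumes "prop_M imp one" "prop_BB imp one"
  shows "imp z (imp (imp z x) x) = one"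
proof -
  have "imp (imp one z) (imp (imp z x) (imp one x)) = one"
    using assms(2) by (simp add: prop_BB_def)
  then show ?thesis
    using assms(1) by (simp add: prop_M_def)
qed

lemma BB_exchange:
  assumes M: "prop_M imp one" and BB: "prop_BB imp one"
    and "imp p (imp q r) = one"
  shows "imp q (imp p r) = one"
proof -
  have "imp (imp p (imp q r)) (imp (imp (imp q r) r) (imp p r)) = one"
    using BB by (simp add: prop_BB_def)
  then have "imp (imp (imp q r) r) (imp p r) = one"
    using M assms(3) by (simp add: prop_M_def)
  with BB_imp_imp_self[OF M BB] show ?thesis
    by (rule BB_trans[OF M BB])
qed

lemma M_BB_imp_B:
  assumes "prop_M imp one" "prop_BB imp one"
  shows "prop_B imp one"
  unfolding prop_B_def
proof (intro allI)
  fix x y z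
  have "imp (imp x y) (imp (imp y z) (imp x z)) = one"
    using assms(2) by (simp add: prop_BB_def)
  then show "imp (imp y z) (imp (imp x y) (imp x z)) = one"
    by (rule BB_exchange[OF assms])
qed

lemma M_B_imp_star2:
  assumes "prop_M imp one" "prop_B imp one"
  shows "prop_star2 imp one"
  unfolding prop_star2_def
proof (intro allI impI)
  fix x y z
  assume "imp y z = one"
  moreover have "imp (imp z x) (imp (imp y z) (imp y x)) = one"
    using assms(2) by (simp add: prop_B_def)
  ultimately show "imp (imp z x) (imp y x) = one"
    using assms(1) by (simp add: prop_M_def)
qed

theorem theorem2p6:
  fixes imp :: "'a \<Rightarrow> 'a \<Rightarrow> 'a" and one :: 'a
  shows "(prop_M imp one \<and> prop_BB imp one \<longrightarrow> prop_B imp one) \<and>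
         (prop_M imp one \<and> prop_B imp one \<longrightarrow> prop_star2 imp one)"
  by (simp add: M_BB_imp_B M_B_imp_star2)

end
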